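(* For each $L\in\{3,4,5,6\}$, the class of I$^2$-GNNs can count $L$-cycles at node level: for all node-graph pairs $(i_1,G_1),(i_2,G_2)$ with $C(L\text{-cycle},i_1,G_1)\ne C(L\text{-cycle},i_2,G_2)$, there exists an I$^2$-GNN whose node representations satisfy $h_{i_1}(G_1)\ne h_{i_2}(G_2)$.
   Context: Graphs are finite, simple, undirected, $G=(V,E)$, possibly carrying node attributes $x_v$ and edge attributes $e_{u,v}$ (a fixed constant when absent). $N(v)$ is the neighbour set of $v$. For $L\ge 3$, an $L$-cycle is a sequence of edges $(v_1,v_2),\dots,(v_L,v_{L+1})$ with $v_1,\dots,v_L$ pairwise distinct and $v_{L+1}=v_1$; two cycles are identified when their edge sets coincide; $C(L\text{-cycle},i,G)$ is the number of inequivalent $L$-cycles containing node $i$. A class $\mathcal F$ of functions on node-graph pairs can count $S$ at node level if for all $(i_1,G_1),(i_2,G_2)$ with $C(S,i_1,G_1)\ne C(S,i_2,G_2)$ there is $f\in\mathcal F$ with $f(i_1,G_1)\ne f(i_2,G_2)$. I$^2$-GNNs. An I$^2$-GNN is specified by an integer $K\ge1$, $T$, arbitrary functions $M_t$ (values in some $\mathbb R^{d_t}$), $U_t$, and arbitrary readouts $R_{\text{edge}},R_{\text{node}}$ on finite multisets. For each root $i\in V$ let $(V_i,E_i)$ be the subgraph of $G$ induced by nodes at shortest-path distance at most $K$ from $i$, and $N_i(k)=\{l\in V_i:(k,l)\in E_i\}$. For each $j\in N(i)$ and $k\in V_i$: $h^{(0)}_{i,j,k}=x_k\oplus\mathbb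 1_{k=i}\oplus\mathbb 1_{k=j}$ ($\oplus$ = concatenation), $h^{(t+1)}_{i,j,k}=U_t\big(h^{(t)}_{i,j,k},\sum_{l\in N_i(k)}M_t(h^{(t)}_{i,j,k},h^{(t)}_{i,j,l},e_{k,l})\big)$; then $h_{i,j}=R_{\text{edge}}(\{\!\{h^{(T)}_{i,j,k}:k\in V_i\}\!\})$ and $h_i=R_{\text{node}}(\{\!\{h_{i,j}:j\in N(i)\}\!\})$. The node-level function computed is $(i,G)\mapsto h_i$; the class of I$^2$-GNNs consists of all such choices. *)

theory Defs
  imports Complex_Main "HOL-Library.Multiset"
begin

record 'v graph =
  verts :: "'v set"
  adj   :: "'v \<Rightarrow> 'v \<Rightarrow> bool"
  nattr :: "'v \<Rightarrow> real list"
  eattr :: "'v \<Rightarrow> 'v \<Rightarrow> real list"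

definition wf_graph :: "('v, 'z) graph_scheme \<Rightarrow> bool" where
  "wf_graph G \<longleftrightarrow>
     finite (verts G) \<and>
     (\<forall>u v. adj G u v \<longrightarrow> u \<in> verts G \<and> v \<in> verts G) \<and>
     (\<forall>u v. adj G u v \<longrightarrow> adj G v u) \<and>
     (\<forall>u. \<not> adj G u u) \<and>
     (\<forall>u v. eattr G u v = eattr G v u) \<and>
     (\<exists>d. \<forall>v \<in> verts G. length (nattr G v) = d) \<and>
     (\<exists>d. \<forall>u v. length (eattr G u v) = d)"

definition nbrs :: "('v, 'z) graph_scheme \<Rightarrow> 'v \<Rightarrow> 'v set" where
  "nbrs G v = {u \<in> verts G. adj G v u}"

definition is_cycle :: "nat \<Rightarrow> ('v, 'z) graph_scheme \<Rightarrow> 'v list \<Rightarrow> bool" where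
  "is_cycle L G vs \<longleftrightarrow> 3 \<le> L \<and> length vs = L \<and> distinct vs \<and> set vs \<subseteq> verts G \<and>
     (\<forall>k < L. adj G (vs ! k) (vs ! ((k + 1) mod L)))"

definition cycle_edges :: "'v list \<Rightarrow> 'v set set" where
  "cycle_edges vs = {{vs ! k, vs ! ((k + 1) mod length vs)} | k. k < length vs}"

definition cycle_count :: "nat \<Rightarrow> ('v, 'z) graph_scheme \<Rightarrow> 'v \<Rightarrow> nat" where
  "cycle_count L G i = card {cycle_edges vs | vs. is_cycle L G vs \<and> i \<in> set vs}"

definition edge_rel :: "('v, 'z) graph_scheme \<Rightarrow> ('v \<times> 'v) set" where
  "edge_rel G = {(u, v). u \<in> verts G \<and> v \<in> verts G \<and> adj G u v}"

definition khop :: "nat \<Rightarrow> ('v, 'z) graph_scheme \<Rightarrow> 'v \<Rightarrow> 'v set" where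
  "khop K G i = {k \<in> verts G. \<exists>n \<le> K. (i, k) \<in> edge_rel G ^^ n}"

record i2gnn =
  hopK  :: nat
  layers :: nat
  mdim  :: "nat \<Rightarrow> nat"
  msg   :: "nat \<Rightarrow> real list \<Rightarrow> real list \<Rightarrow> real list \<Rightarrow> real list"
  upd   :: "nat \<Rightarrow> real list \<Rightarrow> real list \<Rightarrow> real list"
  redge :: "real list multiset \<Rightarrow> real list"
  rnode :: "real list multiset \<Rightarrow> real list"

definition valid_i2gnn :: "i2gnn \<Rightarrow> bool" where
  "valid_i2gnn P \<longleftrightarrow> 1 \<le> hopK P \<and>
     (\<forall>t a b c. length (msg P t a b c) = mdim P t)"

definition vsum :: "nat \<Rightarrow> ('a \<Rightarrow> real list) \<Rightarrow> 'a set \<Rightarrow> real list" where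
  "vsum d f A = map (\<lambda>c. \<Sum>l\<in>A. f l ! c) [0..<d]"

fun hfeat :: "i2gnn \<Rightarrow> ('v, 'z) graph_scheme \<Rightarrow> 'v \<Rightarrow> 'v \<Rightarrow> nat \<Rightarrow> 'v \<Rightarrow> real list" where
  "hfeat P G i j 0 k =
     nattr G k @ [if k = i then 1 else 0, if k = j then 1 else 0]"
| "hfeat P G i j (Suc t) k =
     upd P t (hfeat P G i j t k)
       (vsum (mdim P t)
          (\<lambda>l. msg P t (hfeat P G i j t k) (hfeat P G i j t l) (eattr G k l))
          {l \<in> khop (hopK P) G i. adj G k l})"

definition edge_rep :: "i2gnn \<Rightarrow> ('v, 'z) graph_scheme \<Rightarrow> 'v \<Rightarrow> 'v \<Rightarrow> real list" where
  "edge_rep P G i j =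
     redge P (image_mset (hfeat P G i j (layers P)) (mset_set (khop (hopK P) G i)))"

definition node_rep :: "i2gnn \<Rightarrow> ('v, 'z) graph_scheme \<Rightarrow> 'v \<Rightarrow> real list" where
  "node_rep P G i = rnode P (image_mset (edge_rep P G i) (mset_set (nbrs G i)))"

end

theory Submission
  imports Defs
begin

text \<open>Mark the root i and a neighbour j. Three rounds of message passing on the K-hop subgraph
  give every vertex k the numbers of short walks from k to i and to j that avoid the marked
  vertices. For L \<le> 6 the L-cycles through the edge ij are counted by a polynomial in these
  walk counts: a walk is a cycle unless some of its vertices coincide, and the few coincidences
  the walk counts cannot exclude are removed by inclusion-exclusion. Summing over k (edge
  readout) and over j (node readout) yields every L-cycle through i twice, once per orientation.
  Once K is at least the number of edges, the K-hop subgraph contains all cycles through i.\<close>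

section \<open>Cycles read off from a vertex\<close>

lemma successively_iff_nth:
  "successively P xs \<longleftrightarrow> (\<forall>k. Suc k < length xs \<longrightarrow> P (xs ! k) (xs ! Suc k))"
proof (induction P xs rule: successively.induct)
  case (3 P x y xs)
  then show ?case
    by (auto simp: All_less_Suc2[where P = "\<lambda>k. Suc k < _ \<longrightarrow> _ k"] nth_Cons split: nat.splits)
qed simp_all

lemma successively_set_subset:
  assumes "successively R (x # xs)" and "x \<in> A"
    and closed: "\<And>u v. u \<in> A \<Longrightarrow> R u v \<Longrightarrow> v \<in> A"
  shows "set xs \<subseteq> A"
  using assms(1,2) by (induction xs arbitrary: x) (auto intro: closed)

lemma is_cycle_iff_successively:
  "is_cycle L G vs \<longleftrightarrow> 3 \<le> L \<and> length vs = L \<and> distinct vs \<and> set vs \<subseteq> verts G \<and>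
     successively (adj G) (vs @ [hd vs])"
proof -
  have adj_iff:
    "(\<forall>k<L. adj G (vs ! k) (vs ! ((k + 1) mod L))) \<longleftrightarrow> successively (adj G) (vs @ [hd vs])"
    if "length vs = L" "0 < L" for L
  proof -
    have "(vs @ [hd vs]) ! Suc k = vs ! ((k + 1) mod L)" if "k < L" for k
    proof (cases "Suc k < L")
      case False
      then have "Suc k = L" using that by simp
      then show ?thesis using \<open>length vs = L\<close> by (cases vs) (auto simp: nth_append)
    qed (use \<open>length vs = L\<close> in \<open>simp add: nth_append\<close>)
    then show ?thesis
      using that by (auto simp: successively_iff_nth nth_append)
  qed
  show ?thesis
  proof (cases "3 \<le> L \<and> length vs = L")
    case True
    then show ?thesis using adj_iff[of L] by (auto simp: is_cycle_def)
  qed (auto simp: is_cycle_def)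
qed

lemma cycle_edges_zip:
  assumes "vs \<noteq> []"
  shows "cycle_edges vs = (\<lambda>(a, b). {a, b}) ` set (zip vs (tl vs @ [hd vs]))"
proof -
  have "(tl vs @ [hd vs]) ! k = vs ! ((k + 1) mod length vs)" if "k < length vs" for k
  proof (cases "Suc k < length vs")
    case False
    then have "Suc k = length vs" using that by simp
    then show ?thesis using assms by (cases vs) (auto simp: nth_append)
  qed (use assms in \<open>cases vs; auto simp: nth_append\<close>)
  then show ?thesis
    unfolding cycle_edges_def set_zip by (auto simp: image_iff) (metis length_tl)+
qed

lemma cycle_edges_rotate1: "cycle_edges (rotate1 vs) = cycle_edges vs"
proof (cases vs)
  case (Cons x xs)
  show ?thesis
  proof (cases xs)
    case (Cons y ys)
    have "zip (y # ys @ [x]) (ys @ [x, y]) = zip (y # ys) (ys @ [x]) @ [(x, y)]"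
      using zip_append[of "y # ys" "ys @ [x]" "[x]" "[y]"] by simp
    then have "set (zip (y # ys @ [x]) (ys @ [x, y])) = set (zip (x # y # ys) (y # ys @ [x]))"
      by auto
    then show ?thesis
      by (simp add: \<open>vs = x # xs\<close> Cons cycle_edges_zip)
  qed (simp add: \<open>vs = x # xs\<close>)
qed simp

lemma is_cycle_rotate1:
  assumes "is_cycle L G vs"
  shows "is_cycle L G (rotate1 vs)"
proof -
  obtain x y ys where vs: "vs = x # y # ys"
    using assms by (cases vs rule: remdups_adj.cases) (auto simp: is_cycle_def)
  have "successively (adj G) (x # y # ys @ [x])"
    using assms by (simp add: is_cycle_iff_successively vs)
  then have "successively (adj G) ((y # ys @ [x]) @ [y])"
    using successively_append_iff[of "adj G" "y # ys @ [x]" "[y]"] by simp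
  then show ?thesis
    using assms by (auto simp: is_cycle_iff_successively vs)
qed

definition cycle_reverse :: "'v list \<Rightarrow> 'v list" where
  "cycle_reverse vs = hd vs # rev (tl vs)"

lemma cycle_edges_cycle_reverse:
  assumes "vs \<noteq> []"
  shows "cycle_edges (cycle_reverse vs) = cycle_edges vs"
proof -
  obtain x xs where vs: "vs = x # xs" using assms by (cases vs) auto
  have "zip (x # rev xs) (rev xs @ [x]) = rev (zip (xs @ [x]) (x # xs))"
    by (simp add: zip_rev[symmetric])
  moreover have "set (zip (xs @ [x]) (x # xs)) = (\<lambda>(a, b). (b, a)) ` set (zip (x # xs) (xs @ [x]))"
    by (subst zip_commute) simp
  ultimately show ?thesis
    by (simp add: vs cycle_edges_zip cycle_reverse_def image_image split_def insert_commute)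
qed

lemma is_cycle_cycle_reverse:
  assumes "is_cycle L G vs" and sym: "\<And>u v. adj G u v \<Longrightarrow> adj G v u"
  shows "is_cycle L G (cycle_reverse vs)"
proof -
  obtain x xs where vs: "vs = x # xs" using assms(1) by (cases vs) (auto simp: is_cycle_def)
  have "successively (adj G) (x # xs @ [x])"
    using assms(1) by (simp add: is_cycle_iff_successively vs)
  then have "successively (\<lambda>u v. adj G v u) (x # xs @ [x])"
    by (rule successively_mono) (rule sym)
  then have "successively (adj G) (rev (x # xs @ [x]))"
    by (simp only: successively_rev)
  then show ?thesis
    using assms(1) by (auto simp: is_cycle_iff_successively vs cycle_reverse_def)
qed

lemma cycle_edges_rotate: "cycle_edges (rotate n vs) = cycle_edges vs"
  by (induction n) (simp_all add: cycle_edges_rotate1)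

lemma is_cycle_rotate: "is_cycle L G vs \<Longrightarrow> is_cycle L G (rotate n vs)"
  by (induction n) (simp_all add: is_cycle_rotate1)

lemma cycle_reverse_nth_Suc:
  "k < length vs - 1 \<Longrightarrow> cycle_reverse vs ! Suc k = vs ! (length vs - Suc k)"
  by (cases vs) (auto simp: cycle_reverse_def rev_nth nth_Cons')

lemma cycle_edge_neighbour:
  assumes c: "is_cycle L G vs" and m: "m < L" and e: "{vs ! m, x} \<in> cycle_edges vs"
  shows "x = vs ! ((m + 1) mod L) \<or> x = vs ! ((m + L - 1) mod L)"
proof -
  have L: "length vs = L" "3 \<le> L" "distinct vs" using c by (auto simp: is_cycle_def)
  obtain k where k: "k < L" and ek: "{vs ! m, x} = {vs ! k, vs ! ((k + 1) mod L)}"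
    using e L by (auto simp: cycle_edges_def)
  have kL: "(k + 1) mod L < L" using L by simp
  from ek have "(vs ! m = vs ! k \<and> x = vs ! ((k + 1) mod L)) \<or>
      (vs ! m = vs ! ((k + 1) mod L) \<and> x = vs ! k)"
    by (auto simp: doubleton_eq_iff)
  then show ?thesis
  proof
    assume "vs ! m = vs ! k \<and> x = vs ! ((k + 1) mod L)"
    then show ?thesis using L m k by (simp add: nth_eq_iff_index_eq)
  next
    assume h: "vs ! m = vs ! ((k + 1) mod L) \<and> x = vs ! k"
    then have "m = (k + 1) mod L" using L m kL by (simp add: nth_eq_iff_index_eq)
    have "(m + L - 1) mod L = k"
    proof (cases "k + 1 < L")
      case False
      then have "k + 1 = L" using k by simp
      then show ?thesis using \<open>m = (k + 1) mod L\<close> by simp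
    qed (use \<open>m = (k + 1) mod L\<close> in simp)
    then show ?thesis using h by simp
  qed
qed

text \<open>A cycle is determined by its edge set together with its first two vertices: each further
  vertex is the neighbour of its predecessor other than the vertex before.\<close>
lemma cycle_eq_if_edges_eq:
  assumes cv: "is_cycle L G vs" and cw: "is_cycle L G ws" and E: "cycle_edges ws = cycle_edges vs"
    and h0: "ws ! 0 = vs ! 0" and h1: "ws ! 1 = vs ! 1"
  shows "ws = vs"
proof -
  have L: "length vs = L" "length ws = L" "3 \<le> L" "distinct ws"
    using cv cw by (auto simp: is_cycle_def)
  have step: "k + 1 < L \<longrightarrow> ws ! k = vs ! k \<and> ws ! (k + 1) = vs ! (k + 1)" for k
  proof (induction k)
    case (Suc k)
    show ?case
    proof
      assume k: "Suc k + 1 < L"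
      then have ih: "ws ! k = vs ! k" "ws ! (k + 1) = vs ! (k + 1)" using Suc by auto
      have "{ws ! (k + 1), ws ! ((k + 1 + 1) mod L)} \<in> cycle_edges ws"
        using L k unfolding cycle_edges_def by (intro CollectI exI[of _ "k + 1"]) auto
      then have "{vs ! (k + 1), ws ! (k + 2)} \<in> cycle_edges vs" using E ih k by simp
      from cycle_edge_neighbour[OF cv _ this] k
      have "ws ! (k + 2) = vs ! (k + 2) \<or> ws ! (k + 2) = vs ! k" by simp
      moreover have "ws ! (k + 2) \<noteq> ws ! k" using L k by (simp add: nth_eq_iff_index_eq)
      ultimately show "ws ! Suc k = vs ! Suc k \<and> ws ! (Suc k + 1) = vs ! (Suc k + 1)"
        using ih by auto
    qed
  qed (use h0 h1 in simp)
  show ?thesis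
  proof (rule nth_equalityI)
    show "length ws = length vs" using L by simp
    fix k assume "k < length ws"
    then show "ws ! k = vs ! k" using step[of k] step[of "k - 1"] L
      by (cases "k + 1 < L") auto
  qed
qed

lemma cycle_eq_or_reverse_if_edges_eq:
  assumes cv: "is_cycle L G vs" and cw: "is_cycle L G ws" and E: "cycle_edges ws = cycle_edges vs"
    and h0: "hd ws = hd vs" and sym: "\<And>u v. adj G u v \<Longrightarrow> adj G v u"
  shows "ws = vs \<or> ws = cycle_reverse vs"
proof -
  have L: "length vs = L" "length ws = L" "3 \<le> L" using cv cw by (auto simp: is_cycle_def)
  then have "vs \<noteq> []" "ws \<noteq> []" by auto
  then have h0': "ws ! 0 = vs ! 0" using h0 by (simp add: hd_conv_nth[symmetric])
  have "{ws ! 0, ws ! ((0 + 1) mod L)} \<in> cycle_edges ws"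
    using L unfolding cycle_edges_def by (intro CollectI exI[of _ 0]) auto
  then have "{vs ! 0, ws ! 1} \<in> cycle_edges vs" using E h0' L by simp
  from cycle_edge_neighbour[OF cv _ this] L
  have "ws ! 1 = vs ! 1 \<or> ws ! 1 = vs ! (L - 1)" by simp
  then show ?thesis
  proof
    assume "ws ! 1 = vs ! 1"
    then show ?thesis using cycle_eq_if_edges_eq[OF cv cw E h0'] by simp
  next
    assume w1: "ws ! 1 = vs ! (L - 1)"
    have "ws = cycle_reverse vs"
    proof (rule cycle_eq_if_edges_eq[OF is_cycle_cycle_reverse[OF cv sym] cw])
      show "cycle_edges ws = cycle_edges (cycle_reverse vs)"
        using E \<open>vs \<noteq> []\<close> by (simp add: cycle_edges_cycle_reverse)
      show "ws ! 0 = cycle_reverse vs ! 0"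
        using h0' L by (cases vs) (simp_all add: cycle_reverse_def)
      show "ws ! 1 = cycle_reverse vs ! 1" using w1 L cycle_reverse_nth_Suc[of 0 vs] by simp
    qed
    then show ?thesis by simp
  qed
qed

definition rooted_cycles :: "nat \<Rightarrow> ('v, 'z) graph_scheme \<Rightarrow> 'v \<Rightarrow> 'v list set" where
  "rooted_cycles L G i = {vs. is_cycle L G vs \<and> hd vs = i}"

text \<open>The two rooted cycles are the two orientations of the cycle.\<close>
lemma card_rooted_cycles_with_edges:
  assumes cv: "is_cycle L G vs" and "i \<in> set vs" and sym: "\<And>u v. adj G u v \<Longrightarrow> adj G v u"
  shows "card {ws \<in> rooted_cycles L G i. cycle_edges ws = cycle_edges vs} = 2"
proof -
  obtain p where p: "p < length vs" "vs ! p = i"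
    using \<open>i \<in> set vs\<close> by (auto simp: in_set_conv_nth)
  define v where "v = rotate p vs"
  have L: "length v = L" "3 \<le> L" "distinct v"
    using cv by (auto simp: v_def is_cycle_def)
  have "v \<noteq> []"
    using L by auto
  have "hd v = v ! 0"
    using \<open>v \<noteq> []\<close> by (rule hd_conv_nth)
  also have "\<dots> = i"
    using p by (cases vs) (auto simp: v_def nth_rotate)
  finally have v: "is_cycle L G v" "hd v = i" "cycle_edges v = cycle_edges vs"
    using cv by (simp_all add: v_def is_cycle_rotate cycle_edges_rotate)
  have rv: "is_cycle L G (cycle_reverse v)" "hd (cycle_reverse v) = i"
      "cycle_edges (cycle_reverse v) = cycle_edges vs"
    using v is_cycle_cycle_reverse[OF v(1) sym] cycle_edges_cycle_reverse[OF \<open>v \<noteq> []\<close>]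
    by (simp_all add: cycle_reverse_def[of v])
  have "v ! 1 \<noteq> v ! (L - 1)"
    using L by (simp add: nth_eq_iff_index_eq)
  then have "v \<noteq> cycle_reverse v"
    using L cycle_reverse_nth_Suc[of 0 v] by auto
  moreover have "{ws \<in> rooted_cycles L G i. cycle_edges ws = cycle_edges vs} = {v, cycle_reverse v}"
    using v rv cycle_eq_or_reverse_if_edges_eq[OF v(1) _ _ _ sym]
    by (auto simp: rooted_cycles_def)
  ultimately show ?thesis
    by simp
qed

lemma card_rooted_cycles:
  assumes fin: "finite (verts G)" and sym: "\<And>u v. adj G u v \<Longrightarrow> adj G v u"
  shows "card (rooted_cycles L G i) = 2 * cycle_count L G i"
proof -
  define B where "B = {cycle_edges vs | vs. is_cycle L G vs \<and> i \<in> set vs}"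
  define fib where "fib e = {vs \<in> rooted_cycles L G i. cycle_edges vs = e}" for e
  have fin_cycles: "finite {vs. is_cycle L G vs}"
    by (rule finite_subset[OF _ finite_lists_length_eq[OF fin, of L]]) (auto simp: is_cycle_def)
  have "B = cycle_edges ` {vs. is_cycle L G vs \<and> i \<in> set vs}"
    by (auto simp: B_def)
  then have fin_B: "finite B"
    using fin_cycles by (auto intro: finite_subset)
  have fin_fib: "finite (fib e)" for e
    using fin_cycles by (auto simp: fib_def rooted_cycles_def intro: finite_subset)
  have "i \<in> set vs" if "vs \<in> rooted_cycles L G i" for vs
    using that by (cases vs) (auto simp: rooted_cycles_def is_cycle_def)
  then have cover: "rooted_cycles L G i = \<Union> (fib ` B)"
    by (auto simp: fib_def B_def rooted_cycles_def)
  have "card (rooted_cycles L G i) = (\<Sum>e\<in>B. card (fib e))"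
    unfolding cover
    by (rule card_UN_disjoint[OF fin_B]) (use fin_fib in \<open>auto simp: fib_def\<close>)
  also have "\<dots> = (\<Sum>e\<in>B. 2)"
  proof (rule sum.cong[OF refl])
    fix e
    assume "e \<in> B"
    then obtain vs where "is_cycle L G vs" "i \<in> set vs" "e = cycle_edges vs"
      by (auto simp: B_def)
    then show "card (fib e) = 2"
      using card_rooted_cycles_with_edges[OF _ _ sym] by (simp add: fib_def)
  qed
  finally show ?thesis
    by (simp add: B_def cycle_count_def)
qed


section \<open>Closed-form cycle counts\<close>

lemma card_lists_Suc:
  assumes "finite V"
  shows "card {ws. length ws = Suc n \<and> set ws \<subseteq> V \<and> P ws} =
    (\<Sum>x\<in>V. card {ws. length ws = n \<and> set ws \<subseteq> V \<and> P (x # ws)})"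
proof -
  let ?A = "\<lambda>x. {ws. length ws = n \<and> set ws \<subseteq> V \<and> P (x # ws)}"
  have "finite (?A x)" for x
    by (rule finite_subset[OF _ finite_lists_length_eq[OF assms, of n]]) auto
  have "{ws. length ws = Suc n \<and> set ws \<subseteq> V \<and> P ws} = (\<Union>x\<in>V. (#) x ` ?A x)"
    by (auto simp: length_Suc_conv)
  also have "card \<dots> = (\<Sum>x\<in>V. card ((#) x ` ?A x))"
    using assms \<open>finite (?A _)\<close> by (intro card_UN_disjoint) auto
  also have "\<dots> = (\<Sum>x\<in>V. card (?A x))"
    by (simp add: card_image)
  finally show ?thesis .
qed

lemma card_lists_0: "card {ws. length ws = 0 \<and> set ws \<subseteq> V \<and> P ws} = of_bool (P [])"
proof -
  have "{ws. length ws = 0 \<and> set ws \<subseteq> V \<and> P ws} = (if P [] then {[]} else {})"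
    by auto
  then show ?thesis by simp
qed

text \<open>Walk counts relative to the root i and a marked vertex j: the quantities that a message
  passing network with i and j marked aggregates in its second and third layer.\<close>

locale rooted_graph =
  fixes V :: "'v set" and E :: "'v \<Rightarrow> 'v \<Rightarrow> bool" and i :: 'v
  assumes finite_V: "finite V"
    and sym: "\<And>x y. E x y \<Longrightarrow> E y x" and irrefl: "\<And>x. \<not> E x x"
begin

lemma sum_of_bool_conj_eq:
  assumes "a \<in> V"
  shows "(\<Sum>c\<in>V. of_bool (P c \<and> a = c) :: real) = of_bool (P a)"
proof -
  have "(\<Sum>c\<in>V. of_bool (P c \<and> a = c) :: real) = (\<Sum>c\<in>V. if a = c then of_bool (P a) else 0)"
    by (rule sum.cong) auto
  then show ?thesis
    using assms finite_V by simp
qed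

lemma sum_sum_of_bool_conj_eq:
  "a \<in> V \<Longrightarrow> (\<Sum>c\<in>V. \<Sum>d\<in>V. of_bool (P c d \<and> a = c) :: real) = (\<Sum>d\<in>V. of_bool (P a d))"
  by (subst sum.swap) (simp add: sum_of_bool_conj_eq)

lemma sum_of_bool_eq_mult:
  assumes "j \<in> V"
  shows "(\<Sum>k\<in>V. of_bool (k = j) * f k) = (f j :: real)"
proof -
  have "(\<Sum>k\<in>V. of_bool (k = j) * f k) = (\<Sum>k\<in>V. if k = j then f k else 0)"
    by (rule sum.cong) auto
  then show ?thesis
    using assms finite_V by simp
qed

definition walks2_to_j :: "'v \<Rightarrow> 'v \<Rightarrow> real" where
  "walks2_to_j j b = (\<Sum>a\<in>V. of_bool (E b a \<and> E a j \<and> a \<noteq> i))"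

definition walks2_to_i :: "'v \<Rightarrow> 'v \<Rightarrow> real" where
  "walks2_to_i j c = (\<Sum>d\<in>V. of_bool (E c d \<and> E d i \<and> d \<noteq> j))"

definition walks3_to_i :: "'v \<Rightarrow> 'v \<Rightarrow> real" where
  "walks3_to_i j b = (\<Sum>c\<in>V. of_bool (E b c \<and> c \<noteq> i \<and> c \<noteq> j) * walks2_to_i j c)"

definition walks3_to_j :: "'v \<Rightarrow> 'v \<Rightarrow> real" where
  "walks3_to_j j k = (\<Sum>l\<in>V. of_bool (E k l \<and> l \<noteq> i) * walks2_to_j j l)"

definition common_nbrs3 :: "'v \<Rightarrow> 'v \<Rightarrow> real" where
  "common_nbrs3 j b = (\<Sum>a\<in>V. of_bool (E b a \<and> E a i \<and> E a j))"

definition common_nbrs2 :: "'v \<Rightarrow> real" where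
  "common_nbrs2 k = (\<Sum>l\<in>V. of_bool (E k l \<and> E l i))"

definition degree_avoiding :: "'v \<Rightarrow> 'v \<Rightarrow> real" where
  "degree_avoiding j k = (\<Sum>l\<in>V. of_bool (E k l \<and> l \<noteq> i \<and> l \<noteq> j))"

definition cycle3_term :: "'v \<Rightarrow> 'v \<Rightarrow> real" where
  "cycle3_term j k = of_bool (E k i) * of_bool (E k j)"

definition cycle4_term :: "'v \<Rightarrow> 'v \<Rightarrow> real" where
  "cycle4_term j k = of_bool (E k j) * (1 - of_bool (k = i)) * walks2_to_i j k"

definition cycle5_term :: "'v \<Rightarrow> 'v \<Rightarrow> real" where
  "cycle5_term j k =
     (1 - of_bool (k = i)) * (1 - of_bool (k = j)) *
     (walks2_to_j j k * walks2_to_i j k - common_nbrs3 j k)"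

definition cycle6_term :: "'v \<Rightarrow> 'v \<Rightarrow> real" where
  "cycle6_term j k =
     (1 - of_bool (k = i)) * (1 - of_bool (k = j)) * walks2_to_j j k * walks3_to_i j k
     - of_bool (E k j) * (1 - of_bool (k = i)) * degree_avoiding j k * walks2_to_i j k
     - (1 - of_bool (k = i)) * (1 - of_bool (k = j)) * of_bool (E k i) *
       walks2_to_j j k * degree_avoiding j k
     + (1 - of_bool (k = i)) * (1 - of_bool (k = j)) * of_bool (E k i) * walks2_to_j j k
     - of_bool (k = j) * walks3_to_j j k * common_nbrs2 k
     + 2 * (of_bool (E k i) * of_bool (E k j) * walks2_to_j j k)"

text \<open>Closed walks i j a b c (d) i obeying every distinctness condition of a 5-cycle (6-cycle)
  except a \<noteq> c (and b \<noteq> d, a \<noteq> d), the ones the walk counts cannot see; those are restored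
  by inclusion-exclusion.\<close>

definition walk5 :: "'v \<Rightarrow> 'v \<Rightarrow> 'v \<Rightarrow> 'v \<Rightarrow> bool" where
  "walk5 j a b c \<longleftrightarrow> E i j \<and> E j a \<and> a \<noteq> i \<and> E a b \<and> b \<noteq> i \<and> b \<noteq> j \<and> E b c \<and> E c i \<and> c \<noteq> j"

definition walk6 :: "'v \<Rightarrow> 'v \<Rightarrow> 'v \<Rightarrow> 'v \<Rightarrow> 'v \<Rightarrow> bool" where
  "walk6 j a b c d \<longleftrightarrow>
     E i j \<and> E j a \<and> a \<noteq> i \<and> E a b \<and> b \<noteq> i \<and> b \<noteq> j \<and> E b c \<and> c \<noteq> i \<and> c \<noteq> j \<and>
     E c d \<and> E d i \<and> d \<noteq> j"

lemma walk5_distinct_sum: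
  "(\<Sum>j\<in>V. \<Sum>a\<in>V. \<Sum>b\<in>V. \<Sum>c\<in>V. of_bool (walk5 j a b c \<and> a \<noteq> c) :: real) =
   (\<Sum>j\<in>V. of_bool (E i j) * (\<Sum>k\<in>V. cycle5_term j k))"
proof (rule sum.cong[OF refl])
  fix j
  have by_b: "(\<Sum>a\<in>V. \<Sum>c\<in>V. of_bool (walk5 j a b c) :: real) - (\<Sum>a\<in>V. of_bool (walk5 j a b a)) =
      of_bool (E i j) * cycle5_term j b" for b
  proof -
    have product: "walks2_to_j j b * walks2_to_i j b =
        (\<Sum>a\<in>V. \<Sum>c\<in>V. of_bool (E b a \<and> E a j \<and> a \<noteq> i) * of_bool (E b c \<and> E c i \<and> c \<noteq> j))"
      unfolding walks2_to_j_def sum_distrib_right unfolding walks2_to_i_def sum_distrib_left ..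
    have "(\<Sum>a\<in>V. \<Sum>c\<in>V. of_bool (walk5 j a b c) :: real) =
        of_bool (E i j) *
        ((1 - of_bool (b = i)) * (1 - of_bool (b = j)) * (walks2_to_j j b * walks2_to_i j b))"
      unfolding product sum_distrib_left by (intro sum.cong refl) (auto simp: walk5_def sym)
    moreover have "(\<Sum>a\<in>V. of_bool (walk5 j a b a) :: real) =
        of_bool (E i j) * ((1 - of_bool (b = i)) * (1 - of_bool (b = j)) * common_nbrs3 j b)"
      unfolding common_nbrs3_def sum_distrib_left
      by (intro sum.cong refl) (auto simp: walk5_def sym irrefl)
    ultimately show ?thesis
      by (simp add: cycle5_term_def algebra_simps)
  qed
  have "of_bool (walk5 j a b c \<and> a \<noteq> c) =
      (of_bool (walk5 j a b c) - of_bool (walk5 j a b c \<and> a = c) :: real)"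
    for a b c
    by auto
  then have "(\<Sum>a\<in>V. \<Sum>b\<in>V. \<Sum>c\<in>V. of_bool (walk5 j a b c \<and> a \<noteq> c) :: real) =
      (\<Sum>a\<in>V. \<Sum>b\<in>V. \<Sum>c\<in>V. of_bool (walk5 j a b c)) -
      (\<Sum>a\<in>V. \<Sum>b\<in>V. \<Sum>c\<in>V. of_bool (walk5 j a b c \<and> a = c))"
    by (simp only: sum_subtractf)
  also have "(\<Sum>a\<in>V. \<Sum>b\<in>V. \<Sum>c\<in>V. of_bool (walk5 j a b c \<and> a = c) :: real) =
      (\<Sum>a\<in>V. \<Sum>b\<in>V. of_bool (walk5 j a b a))"
    by (intro sum.cong refl) (simp add: sum_of_bool_conj_eq)
  also have "(\<Sum>a\<in>V. \<Sum>b\<in>V. \<Sum>c\<in>V. of_bool (walk5 j a b c) :: real) -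
      (\<Sum>a\<in>V. \<Sum>b\<in>V. of_bool (walk5 j a b a)) =
      (\<Sum>b\<in>V. \<Sum>a\<in>V. \<Sum>c\<in>V. of_bool (walk5 j a b c)) - (\<Sum>b\<in>V. \<Sum>a\<in>V. of_bool (walk5 j a b a))"
    by (simp only: sum.swap[of "\<lambda>a b. \<Sum>c\<in>V. of_bool (walk5 j a b c)" V V]
        sum.swap[of "\<lambda>a b. of_bool (walk5 j a b a)" V V])
  also have "\<dots> = of_bool (E i j) * (\<Sum>k\<in>V. cycle5_term j k)"
    using by_b by (simp add: sum_subtractf[symmetric] sum_distrib_left)
  finally show "(\<Sum>a\<in>V. \<Sum>b\<in>V. \<Sum>c\<in>V. of_bool (walk5 j a b c \<and> a \<noteq> c) :: real) =
      of_bool (E i j) * (\<Sum>k\<in>V. cycle5_term j k)" .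
qed

lemma of_bool_walk6_distinct:
  "of_bool (walk6 j a b c d \<and> a \<noteq> c \<and> b \<noteq> d \<and> a \<noteq> d) =
   (of_bool (walk6 j a b c d) - of_bool (walk6 j a b c d \<and> a = c)
    - of_bool (walk6 j a b c d \<and> b = d)
    - of_bool (walk6 j a b c d \<and> a = d) + of_bool (walk6 j a b c d \<and> a = c \<and> b = d) :: real)"
  using irrefl by (cases "a = c"; cases "b = d"; cases "a = d"; auto simp: walk6_def)

lemma walk6_sum:
  "(\<Sum>a\<in>V. \<Sum>b\<in>V. \<Sum>c\<in>V. \<Sum>d\<in>V. of_bool (walk6 j a b c d) :: real) =
   of_bool (E i j) *
   (\<Sum>b\<in>V. (1 - of_bool (b = i)) * (1 - of_bool (b = j)) * walks2_to_j j b * walks3_to_i j b)"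
proof -
  have "(\<Sum>a\<in>V. \<Sum>b\<in>V. \<Sum>c\<in>V. \<Sum>d\<in>V. of_bool (walk6 j a b c d) :: real) =
      (\<Sum>b\<in>V. \<Sum>a\<in>V. \<Sum>c\<in>V. \<Sum>d\<in>V. of_bool (walk6 j a b c d))"
    by (rule sum.swap)
  also have "\<dots> = (\<Sum>b\<in>V. of_bool (E i j) *
      ((1 - of_bool (b = i)) * (1 - of_bool (b = j)) * walks2_to_j j b * walks3_to_i j b))"
  proof (rule sum.cong[OF refl])
    fix b
    have product: "walks2_to_j j b * walks3_to_i j b =
        (\<Sum>a\<in>V. \<Sum>c\<in>V. \<Sum>d\<in>V. of_bool (E b a \<and> E a j \<and> a \<noteq> i) *
           (of_bool (E b c \<and> c \<noteq> i \<and> c \<noteq> j) * of_bool (E c d \<and> E d i \<and> d \<noteq> j)))"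
      unfolding walks2_to_j_def sum_distrib_right
      unfolding walks3_to_i_def walks2_to_i_def sum_distrib_left ..
    show "(\<Sum>a\<in>V. \<Sum>c\<in>V. \<Sum>d\<in>V. of_bool (walk6 j a b c d)) = of_bool (E i j) *
        ((1 - of_bool (b = i)) * (1 - of_bool (b = j)) * walks2_to_j j b * walks3_to_i j b)"
      unfolding mult.assoc[of _ "walks2_to_j j b"] product sum_distrib_left
      by (intro sum.cong refl) (auto simp: walk6_def sym)
  qed
  finally show ?thesis
    by (simp add: sum_distrib_left)
qed

lemma walk6_sum_a_eq_c:
  "(\<Sum>a\<in>V. \<Sum>b\<in>V. \<Sum>c\<in>V. \<Sum>d\<in>V. of_bool (walk6 j a b c d \<and> a = c) :: real) =
   of_bool (E i j) *
   (\<Sum>a\<in>V. of_bool (E a j) * (1 - of_bool (a = i)) * degree_avoiding j a * walks2_to_i j a)"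
proof -
  have "(\<Sum>a\<in>V. \<Sum>b\<in>V. \<Sum>c\<in>V. \<Sum>d\<in>V. of_bool (walk6 j a b c d \<and> a = c) :: real) =
      (\<Sum>a\<in>V. \<Sum>b\<in>V. \<Sum>d\<in>V. of_bool (walk6 j a b a d))"
    by (simp add: sum_sum_of_bool_conj_eq cong: sum.cong)
  also have "\<dots> = (\<Sum>a\<in>V. of_bool (E i j) *
      (of_bool (E a j) * (1 - of_bool (a = i)) * degree_avoiding j a * walks2_to_i j a))"
  proof (rule sum.cong[OF refl])
    fix a
    have product: "degree_avoiding j a * walks2_to_i j a =
        (\<Sum>b\<in>V. \<Sum>d\<in>V. of_bool (E a b \<and> b \<noteq> i \<and> b \<noteq> j) * of_bool (E a d \<and> E d i \<and> d \<noteq> j))"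
      unfolding degree_avoiding_def sum_distrib_right unfolding walks2_to_i_def sum_distrib_left ..
    show "(\<Sum>b\<in>V. \<Sum>d\<in>V. of_bool (walk6 j a b a d)) = of_bool (E i j) *
        (of_bool (E a j) * (1 - of_bool (a = i)) * degree_avoiding j a * walks2_to_i j a)"
      unfolding mult.assoc[of _ "degree_avoiding j a"] product sum_distrib_left
      by (intro sum.cong refl) (auto simp: walk6_def sym irrefl)
  qed
  finally show ?thesis
    by (simp add: sum_distrib_left)
qed

lemma walk6_sum_b_eq_d:
  "(\<Sum>a\<in>V. \<Sum>b\<in>V. \<Sum>c\<in>V. \<Sum>d\<in>V. of_bool (walk6 j a b c d \<and> b = d) :: real) =
   of_bool (E i j) *
   (\<Sum>b\<in>V. (1 - of_bool (b = i)) * (1 - of_bool (b = j)) * of_bool (E b i) *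
      walks2_to_j j b * degree_avoiding j b)"
proof -
  have "(\<Sum>a\<in>V. \<Sum>b\<in>V. \<Sum>c\<in>V. \<Sum>d\<in>V. of_bool (walk6 j a b c d \<and> b = d) :: real) =
      (\<Sum>a\<in>V. \<Sum>b\<in>V. \<Sum>c\<in>V. of_bool (walk6 j a b c b))"
    by (simp add: sum_of_bool_conj_eq cong: sum.cong)
  also have "\<dots> = (\<Sum>b\<in>V. \<Sum>a\<in>V. \<Sum>c\<in>V. of_bool (walk6 j a b c b))"
    by (rule sum.swap)
  also have "\<dots> = (\<Sum>b\<in>V. of_bool (E i j) *
      ((1 - of_bool (b = i)) * (1 - of_bool (b = j)) * of_bool (E b i) *
       walks2_to_j j b * degree_avoiding j b))"
  proof (rule sum.cong[OF refl])
    fix b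
    have product: "walks2_to_j j b * degree_avoiding j b =
        (\<Sum>a\<in>V. \<Sum>c\<in>V. of_bool (E b a \<and> E a j \<and> a \<noteq> i) * of_bool (E b c \<and> c \<noteq> i \<and> c \<noteq> j))"
      unfolding walks2_to_j_def sum_distrib_right unfolding degree_avoiding_def sum_distrib_left ..
    show "(\<Sum>a\<in>V. \<Sum>c\<in>V. of_bool (walk6 j a b c b)) = of_bool (E i j) *
        ((1 - of_bool (b = i)) * (1 - of_bool (b = j)) * of_bool (E b i) *
         walks2_to_j j b * degree_avoiding j b)"
      unfolding mult.assoc[of _ "walks2_to_j j b"] product sum_distrib_left
      by (intro sum.cong refl) (auto simp: walk6_def sym irrefl)
  qed
  finally show ?thesis
    by (simp add: sum_distrib_left)
qed

lemma walk6_sum_a_eq_c_b_eq_d: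
  "(\<Sum>a\<in>V. \<Sum>b\<in>V. \<Sum>c\<in>V. \<Sum>d\<in>V. of_bool (walk6 j a b c d \<and> a = c \<and> b = d) :: real) =
   of_bool (E i j) *
   (\<Sum>b\<in>V. (1 - of_bool (b = i)) * (1 - of_bool (b = j)) * of_bool (E b i) * walks2_to_j j b)"
proof -
  have "(\<Sum>a\<in>V. \<Sum>b\<in>V. \<Sum>c\<in>V. \<Sum>d\<in>V. of_bool (walk6 j a b c d \<and> a = c \<and> b = d) :: real) =
      (\<Sum>a\<in>V. \<Sum>b\<in>V. \<Sum>d\<in>V. of_bool (walk6 j a b a d \<and> b = d))"
  proof (rule sum.cong[OF refl], rule sum.cong[OF refl])
    fix a b
    assume "a \<in> V"
    have "walk6 j a b c d \<and> a = c \<and> b = d \<longleftrightarrow> (walk6 j a b c d \<and> b = d) \<and> a = c" for c d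
      by blast
    then show "(\<Sum>c\<in>V. \<Sum>d\<in>V. of_bool (walk6 j a b c d \<and> a = c \<and> b = d) :: real) =
        (\<Sum>d\<in>V. of_bool (walk6 j a b a d \<and> b = d))"
      using sum_sum_of_bool_conj_eq[OF \<open>a \<in> V\<close>, of "\<lambda>c d. walk6 j a b c d \<and> b = d"] by simp
  qed
  also have "\<dots> = (\<Sum>a\<in>V. \<Sum>b\<in>V. of_bool (walk6 j a b a b))"
    by (simp add: sum_of_bool_conj_eq cong: sum.cong)
  also have "\<dots> = (\<Sum>b\<in>V. \<Sum>a\<in>V. of_bool (walk6 j a b a b))"
    by (rule sum.swap)
  also have "\<dots> = (\<Sum>b\<in>V. of_bool (E i j) *
      ((1 - of_bool (b = i)) * (1 - of_bool (b = j)) * of_bool (E b i) * walks2_to_j j b))"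
    unfolding walks2_to_j_def sum_distrib_left
    by (intro sum.cong refl) (auto simp: walk6_def sym irrefl)
  finally show ?thesis
    by (simp add: sum_distrib_left)
qed

text \<open>For a = d the walk is a triangle a b c at a common neighbour a of i and j; the sum is
  reorganised around a, which takes over the role of the marked vertex.\<close>

lemma walk6_sum_a_eq_d_around:
  "(\<Sum>x\<in>V. \<Sum>b\<in>V. \<Sum>c\<in>V. of_bool (walk6 x j b c j) :: real) =
   of_bool (E i j) *
   (walks3_to_j j j * common_nbrs2 j -
    2 * (\<Sum>x\<in>V. of_bool (E x i) * of_bool (E x j) * walks2_to_j j x))"
proof -
  define T where "T x b c \<longleftrightarrow> E i x \<and> E x j \<and> E j b \<and> b \<noteq> i \<and> E b c \<and> c \<noteq> i \<and> E c j" for x b c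
  have "of_bool (walk6 x j b c j) =
      of_bool (E i j) *
      (of_bool (T x b c) - of_bool (T x b c \<and> x = b) - of_bool (T x b c \<and> x = c) :: real)"
    for x b c
    using irrefl by (cases "x = b"; cases "x = c"; auto simp: walk6_def T_def sym)
  then have "(\<Sum>x\<in>V. \<Sum>b\<in>V. \<Sum>c\<in>V. of_bool (walk6 x j b c j) :: real) =
      of_bool (E i j) * ((\<Sum>x\<in>V. \<Sum>b\<in>V. \<Sum>c\<in>V. of_bool (T x b c))
        - (\<Sum>x\<in>V. \<Sum>b\<in>V. \<Sum>c\<in>V. of_bool (T x b c \<and> x = b))
        - (\<Sum>x\<in>V. \<Sum>b\<in>V. \<Sum>c\<in>V. of_bool (T x b c \<and> x = c)))"
    by (simp add: sum_distrib_left sum_subtractf right_diff_distrib)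
  moreover have "(\<Sum>x\<in>V. \<Sum>b\<in>V. \<Sum>c\<in>V. of_bool (T x b c) :: real) = walks3_to_j j j * common_nbrs2 j"
  proof -
    have "(\<Sum>x\<in>V. \<Sum>b\<in>V. \<Sum>c\<in>V. of_bool (T x b c) :: real) =
        (\<Sum>x\<in>V. \<Sum>b\<in>V. \<Sum>c\<in>V.
           of_bool (E j x \<and> E x i) * (of_bool (E j b \<and> b \<noteq> i) * of_bool (E b c \<and> E c j \<and> c \<noteq> i)))"
      by (intro sum.cong refl) (auto simp: T_def sym irrefl)
    also have "\<dots> = common_nbrs2 j * walks3_to_j j j"
      unfolding common_nbrs2_def sum_distrib_right
      unfolding walks3_to_j_def walks2_to_j_def sum_distrib_left ..
    finally show ?thesis
      by simp
  qed
  moreover have "(\<Sum>x\<in>V. \<Sum>b\<in>V. \<Sum>c\<in>V. of_bool (T x b c \<and> x = b) :: real) =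
      (\<Sum>x\<in>V. \<Sum>c\<in>V. of_bool (T x x c))"
    by (simp add: sum_sum_of_bool_conj_eq cong: sum.cong)
  moreover have "(\<Sum>x\<in>V. \<Sum>b\<in>V. \<Sum>c\<in>V. of_bool (T x b c \<and> x = c) :: real) =
      (\<Sum>x\<in>V. \<Sum>b\<in>V. of_bool (T x b x))"
    by (simp add: sum_of_bool_conj_eq cong: sum.cong)
  moreover have "(\<Sum>x\<in>V. \<Sum>c\<in>V. of_bool (T x x c) :: real) =
      (\<Sum>x\<in>V. of_bool (E x i) * of_bool (E x j) * walks2_to_j j x)"
    "(\<Sum>x\<in>V. \<Sum>b\<in>V. of_bool (T x b x) :: real) =
      (\<Sum>x\<in>V. of_bool (E x i) * of_bool (E x j) * walks2_to_j j x)"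
    unfolding walks2_to_j_def sum_distrib_left
    by (intro sum.cong refl; auto simp: T_def sym irrefl)+
  ultimately show ?thesis
    by simp
qed

lemma walk6_sum_a_eq_d:
  "(\<Sum>j\<in>V. \<Sum>a\<in>V. \<Sum>b\<in>V. \<Sum>c\<in>V. \<Sum>d\<in>V. of_bool (walk6 j a b c d \<and> a = d) :: real) =
   (\<Sum>j\<in>V. of_bool (E i j) *
      (walks3_to_j j j * common_nbrs2 j -
       2 * (\<Sum>x\<in>V. of_bool (E x i) * of_bool (E x j) * walks2_to_j j x)))"
proof -
  have "(\<Sum>j\<in>V. \<Sum>a\<in>V. \<Sum>b\<in>V. \<Sum>c\<in>V. \<Sum>d\<in>V. of_bool (walk6 j a b c d \<and> a = d) :: real) =
      (\<Sum>j\<in>V. \<Sum>a\<in>V. \<Sum>b\<in>V. \<Sum>c\<in>V. of_bool (walk6 j a b c a))"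
    by (simp add: sum_of_bool_conj_eq cong: sum.cong)
  also have "\<dots> = (\<Sum>a\<in>V. \<Sum>j\<in>V. \<Sum>b\<in>V. \<Sum>c\<in>V. of_bool (walk6 j a b c a))"
    by (rule sum.swap)
  finally show ?thesis
    by (simp only: walk6_sum_a_eq_d_around)
qed

lemma sum_cycle6_term:
  assumes "j \<in> V"
  shows "of_bool (E i j) * (\<Sum>k\<in>V. cycle6_term j k) =
    (\<Sum>a\<in>V. \<Sum>b\<in>V. \<Sum>c\<in>V. \<Sum>d\<in>V. of_bool (walk6 j a b c d))
    - (\<Sum>a\<in>V. \<Sum>b\<in>V. \<Sum>c\<in>V. \<Sum>d\<in>V. of_bool (walk6 j a b c d \<and> a = c))
    - (\<Sum>a\<in>V. \<Sum>b\<in>V. \<Sum>c\<in>V. \<Sum>d\<in>V. of_bool (walk6 j a b c d \<and> b = d))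
    - of_bool (E i j) *
      (walks3_to_j j j * common_nbrs2 j -
       2 * (\<Sum>x\<in>V. of_bool (E x i) * of_bool (E x j) * walks2_to_j j x))
    + (\<Sum>a\<in>V. \<Sum>b\<in>V. \<Sum>c\<in>V. \<Sum>d\<in>V. of_bool (walk6 j a b c d \<and> a = c \<and> b = d))"
proof -
  have "(\<Sum>k\<in>V. of_bool (k = j) * walks3_to_j j k * common_nbrs2 k) =
      walks3_to_j j j * common_nbrs2 j"
    using sum_of_bool_eq_mult[OF assms, of "\<lambda>k. walks3_to_j j k * common_nbrs2 k"]
    by (simp add: mult.assoc)
  then show ?thesis
    unfolding walk6_sum walk6_sum_a_eq_c walk6_sum_b_eq_d walk6_sum_a_eq_c_b_eq_d cycle6_term_def
    by (simp add: sum.distrib sum_subtractf sum_distrib_left algebra_simps)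
qed

lemma walk6_distinct_sum:
  "(\<Sum>j\<in>V. \<Sum>a\<in>V. \<Sum>b\<in>V. \<Sum>c\<in>V. \<Sum>d\<in>V. of_bool (walk6 j a b c d \<and> a \<noteq> c \<and> b \<noteq> d \<and> a \<noteq> d) :: real) =
   (\<Sum>j\<in>V. of_bool (E i j) * (\<Sum>k\<in>V. cycle6_term j k))"
proof -
  have "(\<Sum>j\<in>V. \<Sum>a\<in>V. \<Sum>b\<in>V. \<Sum>c\<in>V. \<Sum>d\<in>V. of_bool (walk6 j a b c d \<and> a \<noteq> c \<and> b \<noteq> d \<and> a \<noteq> d) :: real) =
      (\<Sum>j\<in>V. \<Sum>a\<in>V. \<Sum>b\<in>V. \<Sum>c\<in>V. \<Sum>d\<in>V. of_bool (walk6 j a b c d))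
      - (\<Sum>j\<in>V. \<Sum>a\<in>V. \<Sum>b\<in>V. \<Sum>c\<in>V. \<Sum>d\<in>V. of_bool (walk6 j a b c d \<and> a = c))
      - (\<Sum>j\<in>V. \<Sum>a\<in>V. \<Sum>b\<in>V. \<Sum>c\<in>V. \<Sum>d\<in>V. of_bool (walk6 j a b c d \<and> b = d))
      - (\<Sum>j\<in>V. \<Sum>a\<in>V. \<Sum>b\<in>V. \<Sum>c\<in>V. \<Sum>d\<in>V. of_bool (walk6 j a b c d \<and> a = d))
      + (\<Sum>j\<in>V. \<Sum>a\<in>V. \<Sum>b\<in>V. \<Sum>c\<in>V. \<Sum>d\<in>V. of_bool (walk6 j a b c d \<and> a = c \<and> b = d))"
    unfolding of_bool_walk6_distinct by (simp only: sum_subtractf sum.distrib)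
  also have "\<dots> = (\<Sum>j\<in>V. of_bool (E i j) * (\<Sum>k\<in>V. cycle6_term j k))"
    unfolding walk6_sum_a_eq_d
    by (simp add: sum_cycle6_term sum.distrib sum_subtractf cong: sum.cong)
  finally show ?thesis .
qed

definition cycle_tails :: "nat \<Rightarrow> 'v list set" where
  "cycle_tails L =
     {ws. Suc (length ws) = L \<and> set ws \<subseteq> V \<and> distinct (i # ws) \<and> successively E (i # ws @ [i])}"

lemma card_cycle_tails_3:
  "real (card (cycle_tails 3)) = (\<Sum>j\<in>V. of_bool (E i j) * (\<Sum>k\<in>V. cycle3_term j k))"
proof -
  have "real (card (cycle_tails 3)) =
      (\<Sum>j\<in>V. \<Sum>a\<in>V. of_bool (distinct [i, j, a] \<and> successively E [i, j, a, i]))"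
    unfolding cycle_tails_def numeral_3_eq_3 nat.inject
    by (simp only: card_lists_Suc[OF finite_V] card_lists_0 of_nat_sum of_nat_of_bool append.simps)
  also have "\<dots> = (\<Sum>j\<in>V. of_bool (E i j) * (\<Sum>k\<in>V. cycle3_term j k))"
    unfolding cycle3_term_def sum_distrib_left
    by (intro sum.cong refl) (auto simp: sym irrefl)
  finally show ?thesis .
qed

lemma card_cycle_tails_4:
  "real (card (cycle_tails 4)) = (\<Sum>j\<in>V. of_bool (E i j) * (\<Sum>k\<in>V. cycle4_term j k))"
proof -
  have len: "Suc (length ws) = 4 \<longleftrightarrow> length ws = Suc (Suc (Suc 0))" for ws :: "'v list"
    by (simp add: eval_nat_numeral)
  have "real (card (cycle_tails 4)) =
      (\<Sum>j\<in>V. \<Sum>a\<in>V. \<Sum>b\<in>V. of_bool (distinct [i, j, a, b] \<and> successively E [i, j, a, b, i]))"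
    unfolding cycle_tails_def len
    by (simp only: card_lists_Suc[OF finite_V] card_lists_0 of_nat_sum of_nat_of_bool append.simps)
  also have "\<dots> = (\<Sum>j\<in>V. of_bool (E i j) * (\<Sum>k\<in>V. cycle4_term j k))"
    unfolding cycle4_term_def walks2_to_i_def sum_distrib_left
    by (intro sum.cong refl) (auto simp: sym irrefl)
  finally show ?thesis .
qed

lemma card_cycle_tails_5:
  "real (card (cycle_tails 5)) = (\<Sum>j\<in>V. of_bool (E i j) * (\<Sum>k\<in>V. cycle5_term j k))"
proof -
  have len: "Suc (length ws) = 5 \<longleftrightarrow> length ws = Suc (Suc (Suc (Suc 0)))" for ws :: "'v list"
    by (simp add: eval_nat_numeral)
  have "real (card (cycle_tails 5)) =
      (\<Sum>j\<in>V. \<Sum>a\<in>V. \<Sum>b\<in>V. \<Sum>c\<in>V.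
         of_bool (distinct [i, j, a, b, c] \<and> successively E [i, j, a, b, c, i]))"
    unfolding cycle_tails_def len
    by (simp only: card_lists_Suc[OF finite_V] card_lists_0 of_nat_sum of_nat_of_bool append.simps)
  also have "\<dots> = (\<Sum>j\<in>V. \<Sum>a\<in>V. \<Sum>b\<in>V. \<Sum>c\<in>V. of_bool (walk5 j a b c \<and> a \<noteq> c))"
    by (intro sum.cong refl) (auto simp: walk5_def irrefl)
  finally show ?thesis
    by (simp only: walk5_distinct_sum)
qed

lemma card_cycle_tails_6:
  "real (card (cycle_tails 6)) = (\<Sum>j\<in>V. of_bool (E i j) * (\<Sum>k\<in>V. cycle6_term j k))"
proof -
  have len: "Suc (length ws) = 6 \<longleftrightarrow> length ws = Suc (Suc (Suc (Suc (Suc 0))))" for ws :: "'v list"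
    by (simp add: eval_nat_numeral)
  have "real (card (cycle_tails 6)) =
      (\<Sum>j\<in>V. \<Sum>a\<in>V. \<Sum>b\<in>V. \<Sum>c\<in>V. \<Sum>d\<in>V.
         of_bool (distinct [i, j, a, b, c, d] \<and> successively E [i, j, a, b, c, d, i]))"
    unfolding cycle_tails_def len
    by (simp only: card_lists_Suc[OF finite_V] card_lists_0 of_nat_sum of_nat_of_bool append.simps)
  also have "\<dots> = (\<Sum>j\<in>V. \<Sum>a\<in>V. \<Sum>b\<in>V. \<Sum>c\<in>V. \<Sum>d\<in>V.
      of_bool (walk6 j a b c d \<and> a \<noteq> c \<and> b \<noteq> d \<and> a \<noteq> d))"
    by (intro sum.cong refl) (auto simp: walk6_def irrefl)
  finally show ?thesis
    by (simp only: walk6_distinct_sum)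
qed

end


section \<open>A message passing network computing the counts\<close>

lemma khop_subset_verts: "khop K G i \<subseteq> verts G"
  by (auto simp: khop_def)

lemma root_in_khop: "i \<in> verts G \<Longrightarrow> i \<in> khop K G i"
  by (auto simp: khop_def intro!: exI[of _ 0])

lemma khop_closed:
  assumes wf: "wf_graph G" and K_bound: "card (edge_rel G) \<le> K"
    and x: "x \<in> khop K G i" and xy: "adj G x y"
  shows "y \<in> khop K G i"
proof -
  have "finite (verts G)" and adj_verts: "x \<in> verts G" "y \<in> verts G"
    using wf xy by (simp_all add: wf_graph_def)
  moreover have "edge_rel G \<subseteq> verts G \<times> verts G"
    by (auto simp: edge_rel_def)
  ultimately have fin: "finite (edge_rel G)"
    using finite_subset by blast
  from x obtain n where "(i, x) \<in> edge_rel G ^^ n"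
    by (auto simp: khop_def)
  then have "(i, x) \<in> (edge_rel G)\<^sup>*"
    by (rule relpow_imp_rtrancl)
  moreover have "(x, y) \<in> edge_rel G"
    using xy adj_verts by (simp add: edge_rel_def)
  ultimately have "(i, y) \<in> (edge_rel G)\<^sup>*"
    by simp
  then obtain m where "m \<le> card (edge_rel G)" "(i, y) \<in> edge_rel G ^^ m"
    using rtrancl_finite_eq_relpow[OF fin] by auto
  then show ?thesis
    using K_bound adj_verts unfolding khop_def by (intro CollectI conjI exI[of _ m]) auto
qed

lemma rooted_graph_khop:
  assumes "wf_graph G"
  shows "rooted_graph (khop K G i) (adj G)"
proof
  have "finite (verts G)"
    using assms by (simp add: wf_graph_def)
  then show "finite (khop K G i)"
    by (rule finite_subset[OF khop_subset_verts])
qed (use assms in \<open>auto simp: wf_graph_def\<close>)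

text \<open>The initial feature of k is its attribute vector followed by the indicators of k = i and
  k = j; the first layer keeps only these two marks, whatever the attribute dimension.\<close>

definition mark_i :: "real list \<Rightarrow> real" where
  "mark_i h = h ! (length h - 2)"

definition mark_j :: "real list \<Rightarrow> real" where
  "mark_j h = h ! (length h - 1)"

definition cycle_msg :: "nat \<Rightarrow> real list \<Rightarrow> real list \<Rightarrow> real list \<Rightarrow> real list" where
  "cycle_msg t a b e =
     (if t = 0 then [mark_i b, mark_j b, 0, 0, 0, 0, 0, 0]
      else if t = 1 then
        [b!3 * (1 - b!0), b!2 * (1 - b!1), b!2 * b!3, (1 - b!0) * (1 - b!1), b!2, 0, 0, 0]
      else [(1 - b!0) * (1 - b!1) * b!5, (1 - b!0) * b!4, 0, 0, 0, 0, 0, 0])"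

definition cycle_upd :: "nat \<Rightarrow> real list \<Rightarrow> real list \<Rightarrow> real list" where
  "cycle_upd t a s =
     (if t = 0 then [mark_i a, mark_j a, s!0, s!1]
      else if t = 1 then a @ [s!0, s!1, s!2, s!3, s!4]
      else a @ [s!0, s!1])"

definition cycle_readout :: "real list \<Rightarrow> real list" where
  "cycle_readout h =
     [h!2 * h!3,
      h!3 * (1 - h!0) * h!5,
      (1 - h!0) * (1 - h!1) * (h!4 * h!5 - h!6),
      (1 - h!0) * (1 - h!1) * h!4 * h!9 - h!3 * (1 - h!0) * h!7 * h!5
        - (1 - h!0) * (1 - h!1) * h!2 * h!4 * h!7 + (1 - h!0) * (1 - h!1) * h!2 * h!4
        - h!1 * h!10 * h!8 + 2 * (h!2 * h!3 * h!4)]"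

definition coord_sums :: "real list multiset \<Rightarrow> real list" where
  "coord_sums M = map (\<lambda>c. \<Sum>v\<in>#M. v ! c) [0..<4]"

definition cycle_gnn :: "nat \<Rightarrow> i2gnn" where
  "cycle_gnn K =
     \<lparr>hopK = K, layers = 3, mdim = (\<lambda>_. 8), msg = cycle_msg, upd = cycle_upd,
      redge = (\<lambda>M. coord_sums (image_mset cycle_readout M)), rnode = coord_sums\<rparr>"

declare hfeat.simps[simp del]

lemma valid_cycle_gnn: "1 \<le> K \<Longrightarrow> valid_i2gnn (cycle_gnn K)"
  by (simp add: valid_i2gnn_def cycle_gnn_def cycle_msg_def)

lemma hfeat_cycle_gnn_Suc:
  "hfeat (cycle_gnn K) G i j (Suc t) k =
     cycle_upd t (hfeat (cycle_gnn K) G i j t k)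
       (vsum 8
         (\<lambda>l. cycle_msg t (hfeat (cycle_gnn K) G i j t k) (hfeat (cycle_gnn K) G i j t l) (eattr G k l))
          {l \<in> khop K G i. adj G k l})"
  by (simp only: hfeat.simps(2)) (simp add: cycle_gnn_def)

lemma vsum_nth: "c < d \<Longrightarrow> vsum d f A ! c = (\<Sum>l\<in>A. f l ! c)"
  by (simp add: vsum_def)

lemma sum_filter_of_bool:
  assumes "finite A"
  shows "(\<Sum>l\<in>{l\<in>A. P l}. f l) = (\<Sum>l\<in>A. of_bool (P l) * (f l :: real))"
proof -
  from assms have "(\<Sum>l\<in>{l\<in>A. P l}. f l) = (\<Sum>l\<in>A. if P l then f l else 0)"
    by (rule sum.inter_filter)
  also have "\<dots> = (\<Sum>l\<in>A. of_bool (P l) * f l)"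
    by (rule sum.cong) auto
  finally show ?thesis .
qed

context
  fixes G :: "('v, 'z) graph_scheme" and i :: 'v and K :: nat
  assumes wf: "wf_graph G" and i_verts: "i \<in> verts G" and K_bound: "card (edge_rel G) \<le> K"
begin

interpretation C: rooted_graph "khop K G i" "adj G" i
  by (rule rooted_graph_khop[OF wf])

lemma vsum_nbrs_nth:
  "c < d \<Longrightarrow> vsum d f {l \<in> khop K G i. adj G k l} ! c =
    (\<Sum>l\<in>khop K G i. of_bool (adj G k l) * (f l ! c))"
  by (simp add: vsum_nth sum_filter_of_bool[OF C.finite_V])

text \<open>Layer one is written Suc 0, the simplifier's normal form of 1 :: nat.\<close>

lemma hfeat_1:
  assumes j: "j \<in> khop K G i" and k: "k \<in> khop K G i"
  shows "hfeat (cycle_gnn K) G i j (Suc 0) k =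
    [of_bool (k = i), of_bool (k = j), of_bool (adj G k i), of_bool (adj G k j)]"
proof -
  let ?V = "khop K G i"
  let ?h = "hfeat (cycle_gnn K) G i j 0"
  have marks: "mark_i (?h l) = of_bool (l = i)" "mark_j (?h l) = of_bool (l = j)" for l
    by (simp_all add: hfeat.simps(1) mark_i_def mark_j_def nth_append)
  have msg: "cycle_msg 0 (?h k) (?h l) (eattr G k l) =
      [of_bool (l = i), of_bool (l = j), 0, 0, 0, 0, 0, 0]" for l
    by (simp add: cycle_msg_def marks)
  have "hfeat (cycle_gnn K) G i j (Suc 0) k =
      [of_bool (k = i), of_bool (k = j),
       \<Sum>l\<in>?V. of_bool (l = i) * of_bool (adj G k l), \<Sum>l\<in>?V. of_bool (l = j) * of_bool (adj G k l)]"
    unfolding hfeat_cycle_gnn_Suc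
    by (simp add: cycle_upd_def msg marks vsum_nbrs_nth mult.commute)
  also have "\<dots> = [of_bool (k = i), of_bool (k = j), of_bool (adj G k i), of_bool (adj G k j)]"
    using C.sum_of_bool_eq_mult[OF root_in_khop[OF i_verts], of "\<lambda>l. of_bool (adj G k l)"]
      C.sum_of_bool_eq_mult[OF j, of "\<lambda>l. of_bool (adj G k l)"]
    by simp
  finally show ?thesis .
qed

lemma hfeat_2:
  assumes j: "j \<in> khop K G i" and k: "k \<in> khop K G i"
  shows "hfeat (cycle_gnn K) G i j 2 k =
    [of_bool (k = i), of_bool (k = j), of_bool (adj G k i), of_bool (adj G k j),
     C.walks2_to_j j k, C.walks2_to_i j k, C.common_nbrs3 j k, C.degree_avoiding j k,
     C.common_nbrs2 k]"
proof -
  let ?V = "khop K G i"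
  let ?h = "hfeat (cycle_gnn K) G i j (Suc 0)"
  define m where "m l = [of_bool (adj G l j \<and> l \<noteq> i), of_bool (adj G l i \<and> l \<noteq> j),
    of_bool (adj G l i \<and> adj G l j), of_bool (l \<noteq> i \<and> l \<noteq> j), of_bool (adj G l i),
    0, 0, 0 :: real]" for l
  have msg: "cycle_msg (Suc 0) (?h k) (?h l) (eattr G k l) = m l" if "l \<in> ?V" for l
  proof -
    have "?h l = [of_bool (l = i), of_bool (l = j), of_bool (adj G l i), of_bool (adj G l j)]"
      using j that by (rule hfeat_1)
    then show ?thesis
      by (simp add: cycle_msg_def m_def of_bool_conj of_bool_not_iff mult.commute)
  qed
  let ?S = "\<lambda>c. \<Sum>l\<in>?V. of_bool (adj G k l) * (m l ! c)"
  have "hfeat (cycle_gnn K) G i j 2 k = hfeat (cycle_gnn K) G i j (Suc (Suc 0)) k"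
    by (simp only: numeral_2_eq_2)
  also have "\<dots> = ?h k @ [?S 0, ?S 1, ?S 2, ?S 3, ?S 4]"
    unfolding hfeat_cycle_gnn_Suc[of K G i j "Suc 0"]
    by (simp add: cycle_upd_def vsum_nbrs_nth msg cong: sum.cong)
  moreover have "?S 0 = C.walks2_to_j j k" "?S 1 = C.walks2_to_i j k" "?S 2 = C.common_nbrs3 j k"
    "?S 3 = C.degree_avoiding j k" "?S 4 = C.common_nbrs2 k"
    unfolding C.walks2_to_j_def C.walks2_to_i_def C.common_nbrs3_def
      C.degree_avoiding_def C.common_nbrs2_def
    by (simp_all add: m_def of_bool_conj mult_ac)
  ultimately show ?thesis
    using j k by (simp add: hfeat_1)
qed

lemma hfeat_3:
  assumes j: "j \<in> khop K G i" and k: "k \<in> khop K G i"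
  shows "hfeat (cycle_gnn K) G i j 3 k =
    [of_bool (k = i), of_bool (k = j), of_bool (adj G k i), of_bool (adj G k j),
     C.walks2_to_j j k, C.walks2_to_i j k, C.common_nbrs3 j k, C.degree_avoiding j k,
     C.common_nbrs2 k, C.walks3_to_i j k, C.walks3_to_j j k]"
proof -
  let ?V = "khop K G i"
  let ?h = "hfeat (cycle_gnn K) G i j 2"
  define m where "m l = [of_bool (l \<noteq> i \<and> l \<noteq> j) * C.walks2_to_i j l,
    of_bool (l \<noteq> i) * C.walks2_to_j j l, 0, 0, 0, 0, 0, 0 :: real]" for l
  have msg: "cycle_msg 2 (?h k) (?h l) (eattr G k l) = m l" if "l \<in> ?V" for l
    using hfeat_2[OF j that] by (simp add: cycle_msg_def m_def of_bool_conj of_bool_not_iff)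
  let ?S = "\<lambda>c. \<Sum>l\<in>?V. of_bool (adj G k l) * (m l ! c)"
  have "hfeat (cycle_gnn K) G i j 3 k = hfeat (cycle_gnn K) G i j (Suc 2) k"
    by (simp only: numeral_3_eq_3 numeral_2_eq_2)
  also have "\<dots> = ?h k @ [?S 0, ?S 1]"
    unfolding hfeat_cycle_gnn_Suc[of K G i j 2]
    by (simp add: cycle_upd_def vsum_nbrs_nth msg cong: sum.cong)
  moreover have "?S 0 = C.walks3_to_i j k" "?S 1 = C.walks3_to_j j k"
    unfolding C.walks3_to_i_def C.walks3_to_j_def
    by (simp_all add: m_def of_bool_conj mult_ac)
  ultimately show ?thesis
    using hfeat_2[OF j k] by simp
qed

lemma nbrs_eq_khop: "nbrs G i = {j \<in> khop K G i. adj G i j}"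
  using khop_closed[OF wf K_bound root_in_khop[OF i_verts]] khop_subset_verts[of K G i]
  by (auto simp: nbrs_def)

lemma node_rep_cycle_gnn_nth:
  assumes "c < 4"
  shows "node_rep (cycle_gnn K) G i ! c =
    (\<Sum>j\<in>khop K G i. of_bool (adj G i j) *
       (\<Sum>k\<in>khop K G i. cycle_readout (hfeat (cycle_gnn K) G i j 3 k) ! c))"
proof -
  have edge_rep: "edge_rep (cycle_gnn K) G i j ! c =
      (\<Sum>k\<in>khop K G i. cycle_readout (hfeat (cycle_gnn K) G i j 3 k) ! c)" for j
    unfolding edge_rep_def sum_unfold_sum_mset
    using assms by (simp add: cycle_gnn_def coord_sums_def image_mset.compositionality o_def)
  have "node_rep (cycle_gnn K) G i ! c = (\<Sum>j\<in>nbrs G i. edge_rep (cycle_gnn K) G i j ! c)"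
    unfolding node_rep_def sum_unfold_sum_mset
    using assms by (simp add: cycle_gnn_def coord_sums_def image_mset.compositionality o_def)
  then show ?thesis
    by (simp add: nbrs_eq_khop sum_filter_of_bool[OF C.finite_V] edge_rep)
qed

lemma cycle_readout_hfeat_3:
  assumes "j \<in> khop K G i" and "k \<in> khop K G i"
  shows "cycle_readout (hfeat (cycle_gnn K) G i j 3 k) =
    [C.cycle3_term j k, C.cycle4_term j k, C.cycle5_term j k, C.cycle6_term j k]"
  using assms by (simp add: hfeat_3 cycle_readout_def C.cycle3_term_def C.cycle4_term_def
      C.cycle5_term_def C.cycle6_term_def)

lemma rooted_cycles_eq_image_cycle_tails:
  assumes "3 \<le> L"
  shows "rooted_cycles L G i = (#) i ` C.cycle_tails L"
proof (intro equalityI subsetI)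
  fix vs
  assume "vs \<in> rooted_cycles L G i"
  then have c: "is_cycle L G vs" and "hd vs = i"
    by (auto simp: rooted_cycles_def)
  then obtain ws where vs: "vs = i # ws"
    by (cases vs) (auto simp: is_cycle_def)
  then have "successively (adj G) (i # ws @ [i])" and "Suc (length ws) = L" and "distinct (i # ws)"
    using c by (simp_all add: is_cycle_iff_successively)
  moreover have "set (ws @ [i]) \<subseteq> khop K G i"
    using \<open>successively (adj G) (i # ws @ [i])\<close> root_in_khop[OF i_verts]
    by (rule successively_set_subset) (rule khop_closed[OF wf K_bound])
  ultimately show "vs \<in> (#) i ` C.cycle_tails L"
    by (auto simp: vs C.cycle_tails_def)
next
  fix vs
  assume "vs \<in> (#) i ` C.cycle_tails L"
  then obtain ws where "vs = i # ws" and "ws \<in> C.cycle_tails L"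
    by blast
  then show "vs \<in> rooted_cycles L G i"
    using assms i_verts khop_subset_verts[of K G i]
    by (auto simp: rooted_cycles_def C.cycle_tails_def is_cycle_iff_successively)
qed

lemma node_rep_cycle_gnn:
  assumes "L \<in> {3, 4, 5, 6}"
  shows "node_rep (cycle_gnn K) G i ! (L - 3) = 2 * real (cycle_count L G i)"
proof -
  let ?V = "khop K G i"
  have "node_rep (cycle_gnn K) G i ! (L - 3) =
      (\<Sum>j\<in>?V. of_bool (adj G i j) *
         (\<Sum>k\<in>?V.
            [C.cycle3_term j k, C.cycle4_term j k, C.cycle5_term j k, C.cycle6_term j k] ! (L - 3)))"
    using assms by (auto simp: node_rep_cycle_gnn_nth cycle_readout_hfeat_3 cong: sum.cong)
  also have "\<dots> = real (card (C.cycle_tails L))"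
    using assms
    by (auto simp: C.card_cycle_tails_3 C.card_cycle_tails_4 C.card_cycle_tails_5 C.card_cycle_tails_6)
  also have "\<dots> = real (card (rooted_cycles L G i))"
    using assms by (subst rooted_cycles_eq_image_cycle_tails) (auto simp: card_image)
  also have "\<dots> = 2 * real (cycle_count L G i)"
    using wf card_rooted_cycles[of G L i] by (simp add: wf_graph_def)
  finally show ?thesis .
qed

end

theorem theorem3:
  fixes G1 :: "'a graph" and G2 :: "'b graph" and i1 :: 'a and i2 :: 'b and L :: nat
  assumes "L \<in> {3, 4, 5, 6}"
    and "wf_graph G1" and "wf_graph G2"
    and "i1 \<in> verts G1" and "i2 \<in> verts G2"
    and "cycle_count L G1 i1 \<noteq> cycle_count L G2 i2"
  shows "\<exists>P. valid_i2gnn P \<and> node_rep P G1 i1 \<noteq> node_rep P G2 i2"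
proof -
  define K where "K = card (edge_rel G1) + card (edge_rel G2) + 1"
  have "node_rep (cycle_gnn K) G1 i1 ! (L - 3) = 2 * real (cycle_count L G1 i1)"
    by (rule node_rep_cycle_gnn[OF assms(2,4) _ assms(1)]) (simp add: K_def)
  moreover have "node_rep (cycle_gnn K) G2 i2 ! (L - 3) = 2 * real (cycle_count L G2 i2)"
    by (rule node_rep_cycle_gnn[OF assms(3,5) _ assms(1)]) (simp add: K_def)
  ultimately have "node_rep (cycle_gnn K) G1 i1 \<noteq> node_rep (cycle_gnn K) G2 i2"
    using assms(6) by auto
  moreover have "valid_i2gnn (cycle_gnn K)"
    by (rule valid_cycle_gnn) (simp add: K_def)
  ultimately show ?thesis
    by blast
qed

end
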